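(* Let $c>0$ and consider the space of variables $(\rho,u,v,p,e,dx,dy)$, with $q^{2}=u^{2}+v^{2}<c^{2}$, where $dx,dy$ are treated as independent coordinates. Put $\Gamma=1/\sqrt{c^{2}-q^{2}}$ and $S=(e+p)\Gamma^{2}$. For a real parameter $\epsilon$ (where all expressions are defined) define $T_\epsilon:(\rho,u,v,p,e,dx,dy)\mapsto(\rho^{*},u^{*},v^{*},p^{*},e^{*},dx^{*},dy^{*})$ by \[ u^{*}=\frac{u}{\epsilon p+1},\quad v^{*}=\frac{v}{\epsilon p+1},\quad p^{*}=\frac{p}{\epsilon p+1},\quad \rho^{*}=\rho c\Gamma\sqrt{\tilde\Delta}\,\frac{\epsilon p+1}{\epsilon(p+Sq^{2})+1}, \] \[ e^{*}=\frac{c^{2}(\epsilon p+1)(e+p)\tilde\Delta}{(\epsilon p+1)(c^{2}-q^{2})+\epsilon(e+p)q^{2}}-\frac{p}{\epsilon p+1},\qquad \tilde\Delta=1-\frac{q^{2}}{c^{2}(\epsilon p+1)^{2}}, \] \[ dx^{*}=\epsilon\big((p+Sv^{2})\,dx-Suv\,dy\big)+dx,\qquad dy^{*}=\epsilon\big(-Suv\,dx+(p+Su^{2})\,dy\big)+dy. \] (This is the subclass, with $a_1=-\epsilon^{-1}$, $a_2=a_4=\epsilon^{-1}$, $a_3=1$ and after rescaling $x^*\to a_1x^*$, $y^*\to a_1y^*$, of reciprocal transformations leaving invariant the two-dimensional steady relativistic gasdynamic system $\partial_x(Ru)+\partial_y(Rv)=0$, $\partial_x(p+Su^2)+\partial_y(Suv)=0$,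 $\partial_x(Suv)+\partial_y(p+Sv^2)=0$, $\partial_x(Su)+\partial_y(Sv)=0$, $R=\rho\Gamma$.) Then $\{T_\epsilon\}$ is a one-parameter Lie group of transformations with infinitesimal generator \[ X=-\rho eq^{2}\Gamma^{2}\partial_{\rho}-pu\,\partial_{u}-pv\,\partial_{v}-p^{2}\partial_{p}+(c^{2}p^{2}-e^{2}q^{2})\Gamma^{2}\partial_{e} \] \[ +\Big(((c^{2}-u^{2})p+ev^{2})\,dx-uv(e+p)\,dy\Big)\Gamma^{2}\partial_{dx}+\Big(((c^{2}-v^{2})p+eu^{2})\,dy-uv(e+p)\,dx\Big)\Gamma^{2}\partial_{dy}, \] that is, with $q^{*2}=u^{*2}+v^{*2}$, the transformed quantities satisfy the Cauchy problem \[ \frac{d\rho^{*}}{d\epsilon}=-\frac{\rho^{*}e^{*}q^{*2}}{c^{2}-q^{*2}},\quad \frac{du^{*}}{d\epsilon}=-p^{*}u^{*},\quad \frac{dv^{*}}{d\epsilon}=-p^{*}v^{*},\quad \frac{dp^{*}}{d\epsilon}=-p^{*2},\quad \frac{de^{*}}{d\epsilon}=\frac{c^{2}p^{*2}-q^{*2}e^{*2}}{c^{2}-q^{*2}}, \] \[ \frac{d(dx^{*})}{d\epsilon}=\frac{((c^{2}-u^{*2})p^{*}+e^{*}v^{*2})dx^{*}-u^{*}v^{*}(e^{*}+p^{*})dy^{*}}{c^{2}-q^{*2}},\quad \frac{d(dy^{*})}{d\epsilon}=\frac{((c^{2}-v^{*2})p^{*}+e^{*}u^{*2})dy^{*}-u^{*}v^{*}(e^{*}+p^{*})dx^{*}}{c^{2}-q^{*2}},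 \] with initial data at $\epsilon=0$ equal to $(\rho,u,v,p,e,dx,dy)$.
   Context: $c$ is the speed of light; $\rho$, $(u,v)$, $p$, $e$ are density, velocity components, pressure and energy density. The differentials $dx,dy$ are regarded as additional coordinates acted on by the transformations. A one-parameter Lie group of transformations is a family $T_\epsilon$ with $T_0=\mathrm{id}$ and $T_{\epsilon_1}\circ T_{\epsilon_2}=T_{\epsilon_1+\epsilon_2}$; its infinitesimal generator is the vector field of $\epsilon$-derivatives at $\epsilon=0$. *)

theory Defs
  imports "HOL-Analysis.Analysis"
begin

type_synonym state = "real \<times> real \<times> real \<times> real \<times> real \<times> real \<times> real"

definition admissible :: "real \<Rightarrow> state \<Rightarrow> bool" where
  "admissible c z = (case z of (\<rho>, u, v, p, e, dx, dy) \<Rightarrow> u\<^sup>2 + v\<^sup>2 < c\<^sup>2)"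

definition Dtil :: "real \<Rightarrow> real \<Rightarrow> state \<Rightarrow> real" where
  "Dtil c \<epsilon> z = (case z of (\<rho>, u, v, p, e, dx, dy) \<Rightarrow>
      1 - (u\<^sup>2 + v\<^sup>2) / (c\<^sup>2 * (\<epsilon> * p + 1)\<^sup>2))"

definition T :: "real \<Rightarrow> real \<Rightarrow> state \<Rightarrow> state" where
  "T c \<epsilon> z = (case z of (\<rho>, u, v, p, e, dx, dy) \<Rightarrow>
     (let q2 = u\<^sup>2 + v\<^sup>2; \<Gamma> = 1 / sqrt (c\<^sup>2 - q2); S = (e + p) * \<Gamma>\<^sup>2;
          D = 1 - q2 / (c\<^sup>2 * (\<epsilon> * p + 1)\<^sup>2) in
      (\<rho> * c * \<Gamma> * sqrt D * ((\<epsilon> * p + 1) / (\<epsilon> * (p + S * q2) + 1)),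
       u / (\<epsilon> * p + 1),
       v / (\<epsilon> * p + 1),
       p / (\<epsilon> * p + 1),
       c\<^sup>2 * (\<epsilon> * p + 1) * (e + p) * D / ((\<epsilon> * p + 1) * (c\<^sup>2 - q2) + \<epsilon> * (e + p) * q2)
         - p / (\<epsilon> * p + 1),
       \<epsilon> * ((p + S * v\<^sup>2) * dx - S * u * v * dy) + dx,
       \<epsilon> * (- S * u * v * dx + (p + S * u\<^sup>2) * dy) + dy)))"

text \<open>The values of eps for which all expressions in T_eps z are defined
  (nonzero denominators) and T_eps z lies again in the phase space (Dtil > 0,
  equivalently q*^2 < c^2).\<close>
definition eps_dom :: "real \<Rightarrow> state \<Rightarrow> real \<Rightarrow> bool" where
  "eps_dom c z \<epsilon> = (case z of (\<rho>, u, v, p, e, dx, dy) \<Rightarrow>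
     (let q2 = u\<^sup>2 + v\<^sup>2; S = (e + p) / (c\<^sup>2 - q2) in
      \<epsilon> * p + 1 \<noteq> 0 \<and> \<epsilon> * (p + S * q2) + 1 \<noteq> 0
      \<and> (\<epsilon> * p + 1) * (c\<^sup>2 - q2) + \<epsilon> * (e + p) * q2 \<noteq> 0
      \<and> Dtil c \<epsilon> z > 0))"

text \<open>The infinitesimal generator X, as a vector field (components along
  d/drho, d/du, d/dv, d/dp, d/de, d/d(dx), d/d(dy)).\<close>
definition X :: "real \<Rightarrow> state \<Rightarrow> state" where
  "X c z = (case z of (\<rho>, u, v, p, e, dx, dy) \<Rightarrow>
     (let q2 = u\<^sup>2 + v\<^sup>2; \<Gamma>2 = 1 / (c\<^sup>2 - q2) in
      (- \<rho> * e * q2 * \<Gamma>2,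
       - p * u,
       - p * v,
       - p\<^sup>2,
       (c\<^sup>2 * p\<^sup>2 - e\<^sup>2 * q2) * \<Gamma>2,
       (((c\<^sup>2 - u\<^sup>2) * p + e * v\<^sup>2) * dx - u * v * (e + p) * dy) * \<Gamma>2,
       (((c\<^sup>2 - v\<^sup>2) * p + e * u\<^sup>2) * dy - u * v * (e + p) * dx) * \<Gamma>2)))"

end

theory Submission
  imports Defs
begin

(* In the variables R = \<rho>\<Gamma> and S = (e + p)\<Gamma>\<^sup>2 of the gasdynamic system, keeping u, v, p, dx, dy,
   the square roots disappear and T\<^sub>\<epsilon> becomes rational.  Put k = 1 + \<epsilon>p and N = 1 + \<epsilon>(p + Sq\<^sup>2),
   both affine in \<epsilon>: T\<^sub>\<epsilon> multiplies R and S by k/N, divides u, v, p by k, and sends (dx, dy) to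
   (I + \<epsilon>P)(dx, dy), where the symmetric matrix P = pI + S(v, -u)(v, -u)^T has eigenvalues p and
   p + Sq\<^sup>2.  Under T\<^sub>\<epsilon>\<^sub>2 the factors transform as cocycles, k(\<epsilon>1, T\<^sub>\<epsilon>\<^sub>2 w) = k(\<epsilon>1 + \<epsilon>2, w) / k(\<epsilon>2, w)
   and likewise for N, while P becomes P(I + \<epsilon>2 P)^-1, so that P(dx, dy) is invariant; this is the
   group law.  The generator is computed in these coordinates and carried back to
   (\<rho>, u, v, p, e, dx, dy) by the chain rule. *)

lemma has_vector_derivative_Pair_iff:
  "((\<lambda>x. (f x, g x)) has_vector_derivative (f', g')) (at x within s) \<longleftrightarrow>
    (f has_vector_derivative f') (at x within s) \<and> (g has_vector_derivative g') (at x within s)"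
proof
  assume "((\<lambda>x. (f x, g x)) has_vector_derivative (f', g')) (at x within s)"
  then show "(f has_vector_derivative f') (at x within s) \<and> (g has_vector_derivative g') (at x within s)"
    unfolding has_vector_derivative_def
    by (auto dest: has_derivative_fst has_derivative_snd)
next
  assume "(f has_vector_derivative f') (at x within s) \<and> (g has_vector_derivative g') (at x within s)"
  then show "((\<lambda>x. (f x, g x)) has_vector_derivative (f', g')) (at x within s)"
    by (simp add: has_vector_derivative_Pair)
qed

definition RS_coords :: "real \<Rightarrow> state \<Rightarrow> state" where
  "RS_coords c z = (case z of (\<rho>, u, v, p, e, dx, dy) \<Rightarrow>
     (\<rho> / sqrt (c\<^sup>2 - (u\<^sup>2 + v\<^sup>2)), u, v, p, (e + p) / (c\<^sup>2 - (u\<^sup>2 + v\<^sup>2)), dx, dy))"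

definition RS_state :: "real \<Rightarrow> state \<Rightarrow> state" where
  "RS_state c w = (case w of (R, u, v, p, S, dx, dy) \<Rightarrow>
     (R * sqrt (c\<^sup>2 - (u\<^sup>2 + v\<^sup>2)), u, v, p, S * (c\<^sup>2 - (u\<^sup>2 + v\<^sup>2)) - p, dx, dy))"

(* (dx_rate w, dy_rate w) = P(dx, dy) *)
definition dx_rate :: "state \<Rightarrow> real" where
  "dx_rate w = (case w of (R, u, v, p, S, dx, dy) \<Rightarrow> (p + S * v\<^sup>2) * dx - S * u * v * dy)"

definition dy_rate :: "state \<Rightarrow> real" where
  "dy_rate w = (case w of (R, u, v, p, S, dx, dy) \<Rightarrow> - S * u * v * dx + (p + S * u\<^sup>2) * dy)"

definition T_RS :: "real \<Rightarrow> state \<Rightarrow> state" where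
  "T_RS \<epsilon> w = (case w of (R, u, v, p, S, dx, dy) \<Rightarrow>
     (let k = \<epsilon> * p + 1; N = \<epsilon> * (p + S * (u\<^sup>2 + v\<^sup>2)) + 1 in
      (k / N * R, u / k, v / k, p / k, k / N * S, \<epsilon> * dx_rate w + dx, \<epsilon> * dy_rate w + dy)))"

definition T_RS_dom :: "real \<Rightarrow> state \<Rightarrow> bool" where
  "T_RS_dom \<epsilon> w = (case w of (R, u, v, p, S, dx, dy) \<Rightarrow>
     \<epsilon> * p + 1 \<noteq> 0 \<and> \<epsilon> * (p + S * (u\<^sup>2 + v\<^sup>2)) + 1 \<noteq> 0)"

definition X_RS :: "state \<Rightarrow> state" where
  "X_RS w = (case w of (R, u, v, p, S, dx, dy) \<Rightarrow>
     (- R * S * (u\<^sup>2 + v\<^sup>2), - p * u, - p * v, - p\<^sup>2, - S\<^sup>2 * (u\<^sup>2 + v\<^sup>2), dx_rate w, dy_rate w))"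

lemma admissible_RS_state [simp]: "admissible c (RS_state c w) \<longleftrightarrow> admissible c w"
  by (cases w) (simp add: RS_state_def admissible_def)

lemma admissible_RS_coords [simp]: "admissible c (RS_coords c z) \<longleftrightarrow> admissible c z"
  by (cases z) (simp add: RS_coords_def admissible_def)

lemma RS_state_RS_coords:
  assumes "admissible c z"
  shows "RS_state c (RS_coords c z) = z"
  using assms by (cases z) (simp add: RS_state_def RS_coords_def admissible_def)

lemma RS_coords_RS_state:
  assumes "admissible c w"
  shows "RS_coords c (RS_state c w) = w"
  using assms by (cases w) (simp add: RS_state_def RS_coords_def admissible_def)

(* for every \<epsilon>, also where a denominator vanishes: both sides then divide by zero alike *)
lemma T_eq_RS:
  assumes c: "c > 0" and adm: "admissible c z"
  shows "T c \<epsilon> z = RS_state c (T_RS \<epsilon> (RS_coords c z))"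
proof -
  obtain \<rho> u v p e dx dy where z: "z = (\<rho>, u, v, p, e, dx, dy)" by (cases z) auto
  define q2 where "q2 = u\<^sup>2 + v\<^sup>2"
  define A where "A = c\<^sup>2 - q2"
  define k where "k = \<epsilon> * p + 1"
  define S where "S = (e + p) / A"
  define N where "N = \<epsilon> * (p + S * q2) + 1"
  have A: "A > 0" using adm unfolding z admissible_def A_def q2_def by simp
  have \<Gamma>2: "(1 / sqrt A)\<^sup>2 = 1 / A" using A by (simp add: power_divide)
  have q2': "(u / k)\<^sup>2 + (v / k)\<^sup>2 = q2 / k\<^sup>2" unfolding q2_def by (simp add: power_divide add_divide_distrib)
  have cD: "c\<^sup>2 * (1 - q2 / (c\<^sup>2 * k\<^sup>2)) = c\<^sup>2 - q2 / k\<^sup>2" using c by (simp add: field_simps)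
  have "sqrt (c\<^sup>2 - q2 / k\<^sup>2) = c * sqrt (1 - q2 / (c\<^sup>2 * k\<^sup>2))"
    unfolding cD[symmetric] real_sqrt_mult using c by simp
  moreover have "k * A + \<epsilon> * (e + p) * q2 = A * N" using A unfolding N_def S_def k_def by (simp add: field_simps)
  ultimately show ?thesis
    unfolding z T_def RS_coords_def T_RS_def RS_state_def dx_rate_def dy_rate_def Let_def prod.case
    unfolding q2_def[symmetric] A_def[symmetric] k_def[symmetric] \<Gamma>2 S_def[symmetric] N_def[symmetric] q2'
    using A by (simp add: cD[symmetric]) (simp add: S_def N_def field_simps)
qed

lemma eps_dom_iff_T_RS_dom:
  assumes c: "c > 0" and adm: "admissible c z"
  shows "eps_dom c z \<epsilon> \<longleftrightarrow>
    T_RS_dom \<epsilon> (RS_coords c z) \<and> admissible c (T_RS \<epsilon> (RS_coords c z))"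
proof -
  obtain \<rho> u v p e dx dy where z: "z = (\<rho>, u, v, p, e, dx, dy)" by (cases z) auto
  define q2 where "q2 = u\<^sup>2 + v\<^sup>2"
  define A where "A = c\<^sup>2 - q2"
  define k where "k = \<epsilon> * p + 1"
  define N where "N = \<epsilon> * (p + (e + p) / A * q2) + 1"
  have A: "A > 0" using adm unfolding z admissible_def A_def q2_def by simp
  have "k * A + \<epsilon> * (e + p) * q2 = A * N" using A unfolding N_def k_def by (simp add: field_simps)
  moreover have "(u / k)\<^sup>2 + (v / k)\<^sup>2 = q2 / k\<^sup>2"
    unfolding q2_def by (simp add: power_divide add_divide_distrib)
  moreover have "1 - q2 / (c\<^sup>2 * k\<^sup>2) > 0 \<longleftrightarrow> q2 / k\<^sup>2 < c\<^sup>2" if "k \<noteq> 0"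
    using c that by (simp add: field_simps)
  ultimately show ?thesis
    unfolding z eps_dom_def Dtil_def T_RS_dom_def RS_coords_def T_RS_def admissible_def Let_def prod.case
    unfolding q2_def[symmetric] A_def[symmetric] k_def[symmetric] N_def[symmetric]
    using A by auto
qed

lemma T_RS_eq:
  "T_RS \<epsilon> (R, u, v, p, S, dx, dy) =
    (let k = \<epsilon> * p + 1; N = \<epsilon> * (p + S * (u\<^sup>2 + v\<^sup>2)) + 1 in
      (k / N * R, u / k, v / k, p / k, k / N * S,
       \<epsilon> * dx_rate (R, u, v, p, S, dx, dy) + dx, \<epsilon> * dy_rate (R, u, v, p, S, dx, dy) + dy))"
  unfolding T_RS_def by simp

lemma T_RS_zero: "T_RS 0 w = w"
  by (cases w) (simp add: T_RS_def)

lemma T_RS_dom_zero: "T_RS_dom 0 w"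
  by (cases w) (simp add: T_RS_dom_def)

lemma rates_T_RS:
  assumes "T_RS_dom \<epsilon> w"
  shows "dx_rate (T_RS \<epsilon> w) = dx_rate w" and "dy_rate (T_RS \<epsilon> w) = dy_rate w"
proof -
  obtain R u v p S dx dy where w: "w = (R, u, v, p, S, dx, dy)" by (cases w) auto
  define k where "k = \<epsilon> * p + 1"
  define N where "N = \<epsilon> * (p + S * (u\<^sup>2 + v\<^sup>2)) + 1"
  define X where "X = \<epsilon> * dx_rate w + dx"
  define Y where "Y = \<epsilon> * dy_rate w + dy"
  have kN: "k \<noteq> 0" "N \<noteq> 0" using assms unfolding w T_RS_dom_def k_def N_def by auto
  have T: "T_RS \<epsilon> w = (k / N * R, u / k, v / k, p / k, k / N * S, X, Y)"
    unfolding w T_RS_eq k_def N_def X_def Y_def by (simp add: Let_def)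
  have "dx_rate (T_RS \<epsilon> w) = ((p * N + S * v\<^sup>2) * X - S * u * v * Y) / (k * N)"
    unfolding T dx_rate_def using kN by (simp add: field_simps power2_eq_square)
  also have "(p * N + S * v\<^sup>2) * X - S * u * v * Y = k * N * dx_rate w"
    unfolding X_def Y_def k_def N_def w dx_rate_def dy_rate_def prod.case by algebra
  finally show "dx_rate (T_RS \<epsilon> w) = dx_rate w" using kN by simp
  have "dy_rate (T_RS \<epsilon> w) = ((p * N + S * u\<^sup>2) * Y - S * u * v * X) / (k * N)"
    unfolding T dy_rate_def using kN by (simp add: field_simps power2_eq_square)
  also have "(p * N + S * u\<^sup>2) * Y - S * u * v * X = k * N * dy_rate w"
    unfolding X_def Y_def k_def N_def w dx_rate_def dy_rate_def prod.case by algebra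
  finally show "dy_rate (T_RS \<epsilon> w) = dy_rate w" using kN by simp
qed

lemma T_RS_add:
  assumes dom2: "T_RS_dom \<epsilon>2 w" and dom12: "T_RS_dom (\<epsilon>1 + \<epsilon>2) w"
  shows "T_RS \<epsilon>1 (T_RS \<epsilon>2 w) = T_RS (\<epsilon>1 + \<epsilon>2) w"
proof -
  obtain R u v p S dx dy where w: "w = (R, u, v, p, S, dx, dy)" by (cases w) auto
  define \<sigma> where "\<sigma> = p + S * (u\<^sup>2 + v\<^sup>2)"
  define k where "k \<epsilon> = \<epsilon> * p + 1" for \<epsilon>
  define N where "N \<epsilon> = \<epsilon> * \<sigma> + 1" for \<epsilon>
  have k: "k \<epsilon>2 \<noteq> 0" "k (\<epsilon>1 + \<epsilon>2) \<noteq> 0" and N: "N \<epsilon>2 \<noteq> 0" "N (\<epsilon>1 + \<epsilon>2) \<noteq> 0"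
    using dom2 dom12 unfolding w T_RS_dom_def k_def N_def \<sigma>_def by auto
  have T_RS_kN: "T_RS \<epsilon> w = (k \<epsilon> / N \<epsilon> * R, u / k \<epsilon>, v / k \<epsilon>, p / k \<epsilon>, k \<epsilon> / N \<epsilon> * S,
      \<epsilon> * dx_rate w + dx, \<epsilon> * dy_rate w + dy)" for \<epsilon>
    unfolding w T_RS_eq k_def N_def \<sigma>_def by (simp add: Let_def)
  note T2 = T_RS_kN[of \<epsilon>2]
  have k_shift: "\<epsilon>1 * (p / k \<epsilon>2) + 1 = k (\<epsilon>1 + \<epsilon>2) / k \<epsilon>2"
    using k unfolding k_def by (simp add: field_simps)
  have \<sigma>_shift: "p / k \<epsilon>2 + k \<epsilon>2 / N \<epsilon>2 * S * ((u / k \<epsilon>2)\<^sup>2 + (v / k \<epsilon>2)\<^sup>2) = \<sigma> / N \<epsilon>2"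
  proof -
    have "p / k \<epsilon>2 + k \<epsilon>2 / N \<epsilon>2 * S * ((u / k \<epsilon>2)\<^sup>2 + (v / k \<epsilon>2)\<^sup>2)
        = (p * N \<epsilon>2 + S * (u\<^sup>2 + v\<^sup>2)) / (k \<epsilon>2 * N \<epsilon>2)"
      using k N by (simp add: field_simps power2_eq_square)
    also have "p * N \<epsilon>2 + S * (u\<^sup>2 + v\<^sup>2) = k \<epsilon>2 * \<sigma>"
      unfolding N_def k_def \<sigma>_def by algebra
    finally show ?thesis using k by simp
  qed
  have N_shift: "\<epsilon>1 * (\<sigma> / N \<epsilon>2) + 1 = N (\<epsilon>1 + \<epsilon>2) / N \<epsilon>2"
    using N(1) unfolding N_def by (simp add: field_simps)
  show ?thesis
    using rates_T_RS[OF dom2] k N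
    unfolding T2 T_RS_eq Let_def k_shift \<sigma>_shift N_shift unfolding T2[symmetric] T_RS_kN[of "\<epsilon>1 + \<epsilon>2"]
    by (simp add: field_simps)
qed

lemma T_RS_has_vector_derivative:
  assumes dom: "T_RS_dom \<epsilon> w"
  shows "((\<lambda>t. T_RS t w) has_vector_derivative X_RS (T_RS \<epsilon> w)) (at \<epsilon>)"
proof -
  obtain R u v p S dx dy where w: "w = (R, u, v, p, S, dx, dy)" by (cases w) auto
  define q2 where "q2 = u\<^sup>2 + v\<^sup>2"
  define k where "k t = t * p + 1" for t
  define N where "N t = t * (p + S * q2) + 1" for t
  have k: "k \<epsilon> \<noteq> 0" and N: "N \<epsilon> \<noteq> 0"
    using dom unfolding w T_RS_dom_def k_def N_def q2_def by auto
  have T_RS_kN: "T_RS t w = (k t / N t * R, u / k t, v / k t, p / k t, k t / N t * S,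
      t * dx_rate w + dx, t * dy_rate w + dy)" for t
    unfolding w T_RS_eq k_def N_def q2_def by (simp add: Let_def)
  have dk: "(k has_real_derivative p) (at \<epsilon>)"
    unfolding k_def by (auto intro!: derivative_eq_intros)
  have dN: "(N has_real_derivative p + S * q2) (at \<epsilon>)"
    unfolding N_def by (auto intro!: derivative_eq_intros)
  have d_scale: "((\<lambda>t. k t / N t) has_real_derivative - S * q2 / (N \<epsilon>)\<^sup>2) (at \<epsilon>)"
    by (rule DERIV_quotient[OF dk dN N, THEN DERIV_cong]) (simp add: k_def N_def power2_eq_square algebra_simps)
  have d_inv_k: "((\<lambda>t. a / k t) has_real_derivative - (p / k \<epsilon>) * (a / k \<epsilon>)) (at \<epsilon>)" for a
    by (rule DERIV_quotient[OF DERIV_const dk k, THEN DERIV_cong]) (simp add: power2_eq_square)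
  have q2_k: "(u / k \<epsilon>)\<^sup>2 + (v / k \<epsilon>)\<^sup>2 = q2 / (k \<epsilon>)\<^sup>2"
    unfolding q2_def by (simp add: power_divide add_divide_distrib)
  show ?thesis
    unfolding T_RS_kN X_RS_def prod.case rates_T_RS[OF dom, unfolded T_RS_kN] q2_k
    unfolding has_vector_derivative_Pair_iff has_real_derivative_iff_has_vector_derivative[symmetric]
  proof (intro conjI)
    show "((\<lambda>t. k t / N t * R) has_real_derivative
        - (k \<epsilon> / N \<epsilon> * R) * (k \<epsilon> / N \<epsilon> * S) * (q2 / (k \<epsilon>)\<^sup>2)) (at \<epsilon>)"
      by (rule DERIV_cmult_right[OF d_scale, THEN DERIV_cong]) (use k in \<open>simp add: field_simps power2_eq_square\<close>)
    show "((\<lambda>t. k t / N t * S) has_real_derivative - (k \<epsilon> / N \<epsilon> * S)\<^sup>2 * (q2 / (k \<epsilon>)\<^sup>2)) (at \<epsilon>)"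
      by (rule DERIV_cmult_right[OF d_scale, THEN DERIV_cong]) (use k in \<open>simp add: field_simps power2_eq_square\<close>)
    show "((\<lambda>t. p / k t) has_real_derivative - (p / k \<epsilon>)\<^sup>2) (at \<epsilon>)"
      using d_inv_k[of p] by (simp add: power2_eq_square)
  qed (rule d_inv_k derivative_eq_intros refl | simp)+
qed

lemma RS_state_maps_integral_curves:
  assumes \<gamma>: "(\<gamma> has_vector_derivative X_RS (\<gamma> t)) (at t)" and adm: "admissible c (\<gamma> t)"
  shows "((\<lambda>s. RS_state c (\<gamma> s)) has_vector_derivative X c (RS_state c (\<gamma> t))) (at t)"
proof -
  define R where "R s = fst (\<gamma> s)" for s
  define u where "u s = fst (snd (\<gamma> s))" for s
  define v where "v s = fst (snd (snd (\<gamma> s)))" for s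
  define p where "p s = fst (snd (snd (snd (\<gamma> s))))" for s
  define S where "S s = fst (snd (snd (snd (snd (\<gamma> s)))))" for s
  define x where "x s = fst (snd (snd (snd (snd (snd (\<gamma> s))))))" for s
  define y where "y s = snd (snd (snd (snd (snd (snd (\<gamma> s))))))" for s
  have \<gamma>_eq: "\<gamma> = (\<lambda>s. (R s, u s, v s, p s, S s, x s, y s))"
    by (simp add: fun_eq_iff R_def u_def v_def p_def S_def x_def y_def)
  define q2 where "q2 = (u t)\<^sup>2 + (v t)\<^sup>2"
  define A where "A = c\<^sup>2 - q2"
  have A: "A > 0" using adm unfolding A_def q2_def \<gamma>_eq admissible_def by simp
  from \<gamma> have dR: "(R has_real_derivative - R t * S t * ((u t)\<^sup>2 + (v t)\<^sup>2)) (at t)"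
    and du: "(u has_real_derivative - p t * u t) (at t)"
    and dv: "(v has_real_derivative - p t * v t) (at t)"
    and dp: "(p has_real_derivative - (p t)\<^sup>2) (at t)"
    and dS: "(S has_real_derivative - (S t)\<^sup>2 * ((u t)\<^sup>2 + (v t)\<^sup>2)) (at t)"
    and dx: "(x has_real_derivative (p t + S t * (v t)\<^sup>2) * x t - S t * u t * v t * y t) (at t)"
    and dy: "(y has_real_derivative - S t * u t * v t * x t + (p t + S t * (u t)\<^sup>2) * y t) (at t)"
    unfolding \<gamma>_eq X_RS_def dx_rate_def dy_rate_def prod.case has_vector_derivative_Pair_iff
    by (simp_all add: has_real_derivative_iff_has_vector_derivative)
  have dA: "((\<lambda>s. c\<^sup>2 - ((u s)\<^sup>2 + (v s)\<^sup>2)) has_real_derivative 2 * p t * q2) (at t)"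
    unfolding q2_def by (rule derivative_eq_intros du dv refl)+ (simp add: algebra_simps power2_eq_square)
  have dsqrtA: "((\<lambda>s. sqrt (c\<^sup>2 - ((u s)\<^sup>2 + (v s)\<^sup>2))) has_real_derivative p t * q2 / sqrt A) (at t)"
  proof (rule DERIV_chain2[OF DERIV_real_sqrt dA, THEN DERIV_cong])
    show "0 < c\<^sup>2 - ((u t)\<^sup>2 + (v t)\<^sup>2)" using A by (simp add: A_def q2_def)
    show "inverse (sqrt (c\<^sup>2 - ((u t)\<^sup>2 + (v t)\<^sup>2))) / 2 * (2 * p t * q2) = p t * q2 / sqrt A"
      unfolding q2_def[symmetric] A_def[symmetric] by (simp add: field_simps)
  qed
  show ?thesis
    unfolding \<gamma>_eq RS_state_def X_def prod.case Let_def has_vector_derivative_Pair_iff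
      has_real_derivative_iff_has_vector_derivative[symmetric]
    unfolding A_def[symmetric] q2_def[symmetric]
  proof (intro conjI)
    show "((\<lambda>s. R s * sqrt (c\<^sup>2 - ((u s)\<^sup>2 + (v s)\<^sup>2))) has_real_derivative
      - (R t * sqrt A) * (S t * A - p t) * q2 * (1 / A)) (at t)"
    proof (rule DERIV_mult[OF dR dsqrtA, THEN DERIV_cong])
      show "- R t * S t * ((u t)\<^sup>2 + (v t)\<^sup>2) * sqrt (c\<^sup>2 - ((u t)\<^sup>2 + (v t)\<^sup>2)) + p t * q2 / sqrt A * R t =
        - (R t * sqrt A) * (S t * A - p t) * q2 * (1 / A)"
        unfolding q2_def[symmetric] A_def[symmetric] using A by (simp add: field_simps)
    qed
    show "((\<lambda>s. S s * (c\<^sup>2 - ((u s)\<^sup>2 + (v s)\<^sup>2)) - p s) has_real_derivative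
      (c\<^sup>2 * (p t)\<^sup>2 - (S t * A - p t)\<^sup>2 * q2) * (1 / A)) (at t)"
      by (rule derivative_eq_intros dS dA dp refl)+ (use A in \<open>simp add: field_simps q2_def A_def power2_eq_square\<close>)
  qed (rule du dv dp DERIV_cong[OF dx] DERIV_cong[OF dy]; use A in \<open>simp add: A_def q2_def field_simps\<close>)+
qed

lemma T_zero:
  assumes c: "c > 0" and adm: "admissible c z"
  shows "eps_dom c z 0" and "T c 0 z = z"
  using adm by (simp_all add: eps_dom_iff_T_RS_dom[OF c adm] T_eq_RS[OF c adm]
    T_RS_dom_zero T_RS_zero RS_state_RS_coords)

lemma T_add:
  assumes c: "c > 0" and adm: "admissible c z"
    and dom2: "eps_dom c z \<epsilon>2" and dom12: "eps_dom c z (\<epsilon>1 + \<epsilon>2)"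
  shows "T c \<epsilon>1 (T c \<epsilon>2 z) = T c (\<epsilon>1 + \<epsilon>2) z"
proof -
  define w where "w = RS_coords c z"
  have w2: "T_RS_dom \<epsilon>2 w" "admissible c (T_RS \<epsilon>2 w)" and w12: "T_RS_dom (\<epsilon>1 + \<epsilon>2) w"
    using dom2 dom12 unfolding eps_dom_iff_T_RS_dom[OF c adm] w_def by auto
  have adm2: "admissible c (T c \<epsilon>2 z)"
    using w2(2) by (simp add: T_eq_RS[OF c adm] w_def)
  have "T c \<epsilon>1 (T c \<epsilon>2 z) = RS_state c (T_RS \<epsilon>1 (RS_coords c (T c \<epsilon>2 z)))"
    by (rule T_eq_RS[OF c adm2])
  also have "\<dots> = RS_state c (T_RS \<epsilon>1 (T_RS \<epsilon>2 w))"
    using RS_coords_RS_state[OF w2(2)] by (simp add: T_eq_RS[OF c adm] w_def)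
  also have "\<dots> = RS_state c (T_RS (\<epsilon>1 + \<epsilon>2) w)"
    by (simp add: T_RS_add[OF w2(1) w12])
  also have "\<dots> = T c (\<epsilon>1 + \<epsilon>2) z"
    by (simp add: T_eq_RS[OF c adm] w_def)
  finally show ?thesis .
qed

lemma T_flow:
  assumes c: "c > 0" and adm: "admissible c z" and dom: "eps_dom c z \<epsilon>"
  shows "admissible c (T c \<epsilon> z)"
    and "((\<lambda>t. T c t z) has_vector_derivative X c (T c \<epsilon> z)) (at \<epsilon>)"
proof -
  define w where "w = RS_coords c z"
  have w: "T_RS_dom \<epsilon> w" "admissible c (T_RS \<epsilon> w)"
    using dom unfolding eps_dom_iff_T_RS_dom[OF c adm] w_def by auto
  have T_z: "T c t z = RS_state c (T_RS t w)" for t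
    by (simp add: T_eq_RS[OF c adm] w_def)
  show "admissible c (T c \<epsilon> z)"
    using w(2) by (simp add: T_z)
  show "((\<lambda>t. T c t z) has_vector_derivative X c (T c \<epsilon> z)) (at \<epsilon>)"
    unfolding T_z by (rule RS_state_maps_integral_curves[OF T_RS_has_vector_derivative[OF w(1)] w(2)])
qed

theorem mainTheorem3:
  fixes c :: real
  assumes "c > 0"
  shows "(\<forall>z. admissible c z \<longrightarrow> eps_dom c z 0 \<and> T c 0 z = z)
    \<and> (\<forall>z \<epsilon>1 \<epsilon>2. admissible c z \<longrightarrow> eps_dom c z \<epsilon>2
          \<longrightarrow> eps_dom c (T c \<epsilon>2 z) \<epsilon>1 \<longrightarrow> eps_dom c z (\<epsilon>1 + \<epsilon>2)
          \<longrightarrow> T c \<epsilon>1 (T c \<epsilon>2 z) = T c (\<epsilon>1 + \<epsilon>2) z)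
    \<and> (\<forall>z \<epsilon>. admissible c z \<longrightarrow> eps_dom c z \<epsilon>
          \<longrightarrow> admissible c (T c \<epsilon> z)
            \<and> ((\<lambda>t. T c t z) has_vector_derivative X c (T c \<epsilon> z)) (at \<epsilon>))"
  \<comment> \<open>the hypothesis on T c \<epsilon>2 z at \<epsilon>1 is implied by the others and not needed\<close>
  using T_zero[OF assms] T_add[OF assms] T_flow[OF assms] by simp

end
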